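(* Let $C$ be a convex cone in a topological real vector space and $f:C\to\mathbb{R}$ a non-negative function that is positively homogeneous of degree $\alpha>0$. If $f$ is strictly sub-convex, then $f$ is continuous on $\mathrm{ri}(C)$. In particular, if $C=V$ is the whole space, $f$ strictly sub-convex implies $f$ continuous.
   Context: Topological real vector spaces are not assumed Hausdorff. A cone is a subset $C$ with $\lambda C\subseteq C$ for all $\lambda>0$. $f$ is positively homogeneous of degree $\alpha$ if $f(\lambda x)=\lambda^{\alpha}f(x)$ for all $x\in C$, $\lambda>0$. $S_r(f)=\{x\in C: f(x)\le r\}$. For a subset $S$, $\mathrm{Aff}(S)$ is its affine hull; $\mathrm{ri}(S)$, $\mathrm{rc}(S)$ are the interior and closure of $S$ in the subspace topology of $\mathrm{Aff}(S)$. $]x,y[=\{(1-t)x+ty: t\in[0,1]\}\setminus\{x,y\}$. A set $C$ is strictly convex if for any two distinct $x,y\in\mathrm{rc}(C)$, $]x,y[\subseteq\mathrm{ri}(C)$. $f$ is strictly sub-convex if $S_r(f)$ is strictly convex for every $r\in\mathbb{R}$. *)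

theory Defs
  imports "HOL-Analysis.Analysis"
begin

text \<open>A topological real vector space (not assumed Hausdorff): a real vector space
  with a topology for which addition and scalar multiplication are continuous.\<close>
definition tvs :: "'a::{real_vector,topological_space} itself \<Rightarrow> bool" where
  "tvs _ \<longleftrightarrow> continuous_on UNIV (\<lambda>p::'a \<times> 'a. fst p + snd p) \<and>
              continuous_on UNIV (\<lambda>p::real \<times> 'a. fst p *\<^sub>R snd p)"

definition is_cone :: "'a::real_vector set \<Rightarrow> bool" where
  "is_cone C \<longleftrightarrow> (\<forall>x\<in>C. \<forall>l::real. l > 0 \<longrightarrow> l *\<^sub>R x \<in> C)"

definition pos_homogeneous :: "'a::real_vector set \<Rightarrow> real \<Rightarrow> ('a \<Rightarrow> real) \<Rightarrow> bool" where
  "pos_homogeneous C \<alpha> f \<longleftrightarrow> (\<forall>x\<in>C. \<forall>l::real. l > 0 \<longrightarrow> f (l *\<^sub>R x) = l powr \<alpha> * f x)"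

definition sublevel :: "'a set \<Rightarrow> ('a \<Rightarrow> real) \<Rightarrow> real \<Rightarrow> 'a set" where
  "sublevel C f r = {x\<in>C. f x \<le> r}"

definition ri :: "'a::{real_vector,topological_space} set \<Rightarrow> 'a set" where
  "ri S = (top_of_set (affine hull S)) interior_of S"

definition rc :: "'a::{real_vector,topological_space} set \<Rightarrow> 'a set" where
  "rc S = (top_of_set (affine hull S)) closure_of S"

definition strictly_convex_set :: "'a::{real_vector,topological_space} set \<Rightarrow> bool" where
  "strictly_convex_set C \<longleftrightarrow>
     (\<forall>x\<in>rc C. \<forall>y\<in>rc C. x \<noteq> y \<longrightarrow> open_segment x y \<subseteq> ri C)"

definition strictly_subconvex :: "'a::{real_vector,topological_space} set \<Rightarrow> ('a \<Rightarrow> real) \<Rightarrow> bool" where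
  "strictly_subconvex C f \<longleftrightarrow> (\<forall>r::real. strictly_convex_set (sublevel C f r))"

end

theory Submission
  imports Defs
begin

(* For r > 0 the sublevel set S_r = {x \<in> C. f x \<le> r} contains all small positive multiples
   of every point of the cone, so its affine hull contains C and its relative closure contains 0.
   If f x > r, then x \<notin> rc S_r: otherwise strict convexity would put the points t x, 0 < t < 1,
   into S_r, although f (t x) = t^\<alpha> f x > r for t close to 1. This gives lower semicontinuity.
   If f x < r and x \<in> ri C, then x lies on the open segment from 0 to some l x \<in> S_r with l > 1
   (for x = 0, which forces C = -C, on the segment between \<plusminus>s y \<in> S_r), so x \<in> ri S_r.
   This gives upper semicontinuity. *)

lemma continuous_on_if_semicontinuous:
  fixes f :: "'a::topological_space \<Rightarrow> 'b::linorder_topology"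
  assumes "\<And>x a. x \<in> S \<Longrightarrow> a < f x \<Longrightarrow> \<exists>U. open U \<and> x \<in> U \<and> (\<forall>y\<in>U \<inter> S. a < f y)"
    and "\<And>x b. x \<in> S \<Longrightarrow> f x < b \<Longrightarrow> \<exists>U. open U \<and> x \<in> U \<and> (\<forall>y\<in>U \<inter> S. f y < b)"
  shows "continuous_on S f"
  unfolding continuous_on_def order_tendsto_iff eventually_at_topological
proof (intro ballI conjI allI impI)
  fix x a assume "x \<in> S" "a < f x"
  then obtain U where "open U" "x \<in> U" "\<forall>y\<in>U \<inter> S. a < f y"
    using assms(1) by blast
  then show "\<exists>U. open U \<and> x \<in> U \<and> (\<forall>y\<in>U. y \<noteq> x \<longrightarrow> y \<in> S \<longrightarrow> a < f y)"
    by auto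
next
  fix x b assume "x \<in> S" "f x < b"
  then obtain U where "open U" "x \<in> U" "\<forall>y\<in>U \<inter> S. f y < b"
    using assms(2) by blast
  then show "\<exists>U. open U \<and> x \<in> U \<and> (\<forall>y\<in>U. y \<noteq> x \<longrightarrow> y \<in> S \<longrightarrow> f y < b)"
    by auto
qed

lemma in_rc_iff:
  "x \<in> rc S \<longleftrightarrow> x \<in> affine hull S \<and> (\<forall>U. open U \<longrightarrow> x \<in> U \<longrightarrow> (\<exists>y\<in>S. y \<in> U))"
    (is "_ \<longleftrightarrow> ?rhs")
proof
  assume "x \<in> rc S"
  then have x: "x \<in> affine hull S"
    and near: "\<And>T. x \<in> T \<Longrightarrow> openin (top_of_set (affine hull S)) T \<Longrightarrow> \<exists>y\<in>S. y \<in> T"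
    by (auto simp: rc_def in_closure_of)
  have "\<exists>y\<in>S. y \<in> U" if "open U" "x \<in> U" for U
    using near[of "affine hull S \<inter> U"] x that by (auto simp: openin_open_Int)
  with x show ?rhs
    by blast
next
  assume ?rhs
  then show "x \<in> rc S"
    unfolding rc_def in_closure_of openin_open by (auto intro: hull_inc)
qed

lemma in_ri_iff:
  "x \<in> ri S \<longleftrightarrow> x \<in> S \<and> (\<exists>U. open U \<and> x \<in> U \<and> affine hull S \<inter> U \<subseteq> S)"
  using hull_subset[of S affine] unfolding ri_def interior_of_def openin_open by blast

lemma ri_subset: "ri S \<subseteq> S"
  by (auto simp: in_ri_iff)

lemma subset_rc: "S \<subseteq> rc S"
  by (auto simp: in_rc_iff hull_inc)

lemma ri_UNIV [simp]: "ri UNIV = UNIV"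
  by (simp add: ri_def)

lemma strictly_subconvexD:
  assumes "strictly_subconvex C f" "a \<in> rc (sublevel C f r)" "b \<in> rc (sublevel C f r)" "a \<noteq> b"
  shows "open_segment a b \<subseteq> ri (sublevel C f r)"
  using assms unfolding strictly_subconvex_def strictly_convex_set_def by blast

lemma eventually_at_right_obtain:
  fixes a :: real
  assumes "eventually P (at_right a)"
  obtains t where "a < t" "P t"
  using eventually_happens'[OF trivial_limit_at_right_real eventually_conj[OF eventually_at_right_less assms]]
  by blast

lemma affine_scaleR_mem:
  assumes "affine A" "s *\<^sub>R x \<in> A" "t *\<^sub>R x \<in> A" "s \<noteq> t"
  shows "u *\<^sub>R x \<in> A"
proof -
  define c where "c = (u - t) / (s - t)"
  have "c *\<^sub>R (s *\<^sub>R x) + (1 - c) *\<^sub>R (t *\<^sub>R x) \<in> A"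
    by (rule mem_affine[OF assms(1-3)]) simp
  moreover have "c *\<^sub>R (s *\<^sub>R x) + (1 - c) *\<^sub>R (t *\<^sub>R x) = (t + c * (s - t)) *\<^sub>R x"
    by (simp add: algebra_simps)
  moreover have "t + c * (s - t) = u"
    using assms(4) by (simp add: c_def)
  ultimately show ?thesis by simp
qed

lemma tvs_eventually_scaleR_mem_open:
  assumes "tvs TYPE('a::{real_vector,topological_space})" "open U" "(0::'a) \<in> U"
  shows "eventually (\<lambda>t. t *\<^sub>R y \<in> U) (at_right 0)"
proof -
  have "continuous_on UNIV (\<lambda>p::real \<times> 'a. fst p *\<^sub>R snd p)"
    using assms(1) by (simp add: tvs_def)
  then have "continuous_on UNIV (\<lambda>t::real. (\<lambda>p::real \<times> 'a. fst p *\<^sub>R snd p) (t, y))"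
    by (rule continuous_on_compose2) (auto intro: continuous_intros)
  then have "continuous_on UNIV (\<lambda>t::real. t *\<^sub>R y)"
    by simp
  then have "((\<lambda>t. t *\<^sub>R y) \<longlongrightarrow> 0) (at 0)"
    by (metis continuous_on_eq_continuous_at isCont_def open_UNIV scale_zero_left UNIV_I)
  then have "((\<lambda>t. t *\<^sub>R y) \<longlongrightarrow> 0) (at_right 0)"
    by (rule tendsto_mono[OF at_le[OF subset_UNIV], rotated])
  then show ?thesis
    using assms(2,3) by (rule topological_tendstoD)
qed

lemma cone_uminus_mem_if_zero_in_ri:
  assumes "tvs TYPE('a::{real_vector,topological_space})" "is_cone C" "0 \<in> ri C" "(y::'a) \<in> C"
  shows "- y \<in> C"
proof -
  obtain U where U: "open U" "0 \<in> U" "affine hull C \<inter> U \<subseteq> C"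
    using assms(3) in_ri_iff by blast
  have "0 \<in> C"
    using assms(3) ri_subset by blast
  obtain t where t: "t > 0" "t *\<^sub>R (- y) \<in> U"
    using tvs_eventually_scaleR_mem_open[OF assms(1) U(1,2)] by (rule eventually_at_right_obtain)
  have "0 *\<^sub>R y \<in> affine hull C" "1 *\<^sub>R y \<in> affine hull C"
    using \<open>0 \<in> C\<close> assms(4) by (auto intro: hull_inc)
  then have "(- t) *\<^sub>R y \<in> affine hull C"
    by (rule affine_scaleR_mem[OF affine_affine_hull]) simp
  with t U(3) have "t *\<^sub>R (- y) \<in> C"
    by auto
  then have "(1 / t) *\<^sub>R (t *\<^sub>R (- y)) \<in> C"
    using assms(2) t(1) unfolding is_cone_def by (meson divide_pos_pos zero_less_one)
  then show ?thesis
    using t(1) by simp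
qed

locale homogeneous_on_cone =
  fixes C :: "'a::{real_vector,topological_space} set" and f :: "'a \<Rightarrow> real" and \<alpha> :: real
  assumes cone: "is_cone C"
    and nonneg: "\<And>x. x \<in> C \<Longrightarrow> f x \<ge> 0"
    and degree_pos: "\<alpha> > 0"
    and homogeneous: "pos_homogeneous C \<alpha> f"
begin

lemma scaleR_mem: "x \<in> C \<Longrightarrow> t > 0 \<Longrightarrow> t *\<^sub>R x \<in> C"
  using cone by (simp add: is_cone_def)

lemma f_scaleR: "x \<in> C \<Longrightarrow> t > 0 \<Longrightarrow> f (t *\<^sub>R x) = t powr \<alpha> * f x"
  using homogeneous by (simp add: pos_homogeneous_def)

lemma scaleR_mem_sublevel_iff:
  "x \<in> C \<Longrightarrow> t > 0 \<Longrightarrow> t *\<^sub>R x \<in> sublevel C f r \<longleftrightarrow> t powr \<alpha> * f x \<le> r"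
  by (simp add: sublevel_def scaleR_mem f_scaleR)

lemma f_zero: "0 \<in> C \<Longrightarrow> f 0 = 0"
  using f_scaleR[of 0 2] degree_pos by simp

lemma eventually_scaleR_mem_sublevel:
  assumes "x \<in> C" "r > 0"
  shows "eventually (\<lambda>t. t *\<^sub>R x \<in> sublevel C f r) (at_right 0)"
proof -
  have "((\<lambda>t. t powr \<alpha> * f x) \<longlongrightarrow> 0) (at_right 0)"
    using degree_pos by (auto intro!: tendsto_mult_left_zero tendsto_zero_powrI
        eventually_at_rightI[of 0 1] tendsto_ident_at)
  then have "eventually (\<lambda>t. t powr \<alpha> * f x < r) (at_right 0)"
    using assms(2) by (rule order_tendstoD)
  with eventually_at_right_less show ?thesis
    by eventually_elim (use assms(1) scaleR_mem_sublevel_iff in auto)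
qed

lemma scaleR_mem_affine_hull_sublevel:
  assumes "x \<in> C" "r > 0"
  shows "u *\<^sub>R x \<in> affine hull (sublevel C f r)"
proof -
  obtain b where b: "b > 0" "\<And>t. 0 < t \<Longrightarrow> t < b \<Longrightarrow> t *\<^sub>R x \<in> sublevel C f r"
    using eventually_scaleR_mem_sublevel[OF assms] by (auto simp: eventually_at_right_field)
  have "(b / 2) *\<^sub>R x \<in> affine hull (sublevel C f r)" "(b / 4) *\<^sub>R x \<in> affine hull (sublevel C f r)"
    using b by (auto intro: hull_inc)
  then show ?thesis
    by (rule affine_scaleR_mem[OF affine_affine_hull]) (use b(1) in simp)
qed

lemma subset_affine_hull_sublevel: "r > 0 \<Longrightarrow> C \<subseteq> affine hull (sublevel C f r)"
  using scaleR_mem_affine_hull_sublevel[where u = 1] by auto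

lemma zero_mem_rc_sublevel:
  assumes "tvs TYPE('a)" "x \<in> C" "r > 0"
  shows "0 \<in> rc (sublevel C f r)"
  unfolding in_rc_iff
proof (intro conjI allI impI)
  show "0 \<in> affine hull (sublevel C f r)"
    using scaleR_mem_affine_hull_sublevel[OF assms(2,3), where u = 0] by simp
  fix U :: "'a set" assume "open U" "0 \<in> U"
  have "eventually (\<lambda>t. t *\<^sub>R x \<in> U \<and> t *\<^sub>R x \<in> sublevel C f r) (at_right 0)"
    using tvs_eventually_scaleR_mem_open[OF assms(1) \<open>open U\<close> \<open>0 \<in> U\<close>]
      eventually_scaleR_mem_sublevel[OF assms(2,3)] by (rule eventually_conj)
  then show "\<exists>y\<in>sublevel C f r. y \<in> U"
    by (rule eventually_at_right_obtain) blast
qed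

lemma not_mem_rc_sublevel:
  assumes "tvs TYPE('a)" "strictly_subconvex C f" "x \<in> C" "0 < r" "r < f x"
  shows "x \<notin> rc (sublevel C f r)"
proof
  assume x_rc: "x \<in> rc (sublevel C f r)"
  have "x \<noteq> 0"
    using assms(3-5) f_zero by auto
  have "((\<lambda>t. t powr \<alpha> * f x) \<longlongrightarrow> f x) (at_left 1)"
    by (auto intro!: tendsto_eq_intros)
  then have "eventually (\<lambda>t. r < t powr \<alpha> * f x) (at_left 1)"
    using assms(5) by (rule order_tendstoD)
  moreover have "eventually (\<lambda>t::real. 0 < t \<and> t < 1) (at_left 1)"
    by (auto simp: eventually_at_left_field intro: exI[of _ 0])
  ultimately have "eventually (\<lambda>t. r < t powr \<alpha> * f x \<and> 0 < t \<and> t < 1) (at_left 1)"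
    by (rule eventually_conj)
  then obtain t where t: "0 < t" "t < 1" "r < t powr \<alpha> * f x"
    using eventually_happens'[OF trivial_limit_at_left_real] by blast
  have "t *\<^sub>R x \<in> open_segment 0 x"
    using t \<open>x \<noteq> 0\<close> by (auto simp: in_segment)
  also have "\<dots> \<subseteq> ri (sublevel C f r)"
    using strictly_subconvexD[OF assms(2) zero_mem_rc_sublevel[OF assms(1,3,4)] x_rc] \<open>x \<noteq> 0\<close>
    by auto
  finally have "t *\<^sub>R x \<in> sublevel C f r"
    using ri_subset by blast
  with t assms(3) show False
    by (simp add: scaleR_mem_sublevel_iff)
qed

lemma nonzero_mem_ri_sublevel:
  assumes "tvs TYPE('a)" "strictly_subconvex C f" "x \<in> C" "x \<noteq> 0" "f x < r"
  shows "x \<in> ri (sublevel C f r)"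
proof -
  have "r > 0"
    using assms(3,5) nonneg by force
  have "((\<lambda>t. t powr \<alpha> * f x) \<longlongrightarrow> f x) (at_right 1)"
    by (auto intro!: tendsto_eq_intros)
  then have "eventually (\<lambda>t. t powr \<alpha> * f x < r) (at_right 1)"
    using assms(5) by (rule order_tendstoD)
  then obtain l where l: "1 < l" "l powr \<alpha> * f x < r"
    by (rule eventually_at_right_obtain)
  then have "l *\<^sub>R x \<in> rc (sublevel C f r)"
    using assms(3) subset_rc scaleR_mem_sublevel_iff[of x l r] by auto
  moreover have "0 \<noteq> l *\<^sub>R x"
    using l(1) assms(4) by simp
  moreover have "x \<in> open_segment 0 (l *\<^sub>R x)"
    using l(1) assms(4) by (auto simp: in_segment intro!: exI[of _ "1 / l"])
  ultimately show ?thesis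
    using strictly_subconvexD[OF assms(2) zero_mem_rc_sublevel[OF assms(1,3) \<open>r > 0\<close>]] by blast
qed

lemma zero_mem_ri_sublevel:
  assumes "tvs TYPE('a)" "strictly_subconvex C f" "0 \<in> ri C" "r > 0"
  shows "0 \<in> ri (sublevel C f r)"
proof (cases "C \<subseteq> {0}")
  case True
  then have "sublevel C f r = C"
    using f_zero assms(4) by (auto simp: sublevel_def)
  then show ?thesis
    using assms(3) by simp
next
  case False
  then obtain y where y: "y \<in> C" "y \<noteq> 0"
    by auto
  have "- y \<in> C"
    using cone_uminus_mem_if_zero_in_ri[OF assms(1) cone assms(3) y(1)] .
  have "eventually (\<lambda>s. s *\<^sub>R y \<in> sublevel C f r) (at_right 0)"
    "eventually (\<lambda>s. s *\<^sub>R (- y) \<in> sublevel C f r) (at_right 0)"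
    using eventually_scaleR_mem_sublevel[OF y(1) assms(4)]
      eventually_scaleR_mem_sublevel[OF \<open>- y \<in> C\<close> assms(4)] .
  then have "eventually (\<lambda>s. s *\<^sub>R y \<in> sublevel C f r \<and> s *\<^sub>R (- y) \<in> sublevel C f r) (at_right 0)"
    by (rule eventually_conj)
  then obtain s where s: "s > 0" "s *\<^sub>R y \<in> sublevel C f r" "s *\<^sub>R (- y) \<in> sublevel C f r"
    by (rule eventually_at_right_obtain) blast
  then have rc: "s *\<^sub>R y \<in> rc (sublevel C f r)" "- (s *\<^sub>R y) \<in> rc (sublevel C f r)"
    using subset_rc by auto
  have "s *\<^sub>R y \<noteq> - (s *\<^sub>R y)"
  proof
    assume "s *\<^sub>R y = - (s *\<^sub>R y)"
    then have "(s + s) *\<^sub>R y = 0"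
      by (simp only: scaleR_left_distrib eq_neg_iff_add_eq_0)
    with s(1) y(2) show False
      by simp
  qed
  then have "midpoint (s *\<^sub>R y) (- (s *\<^sub>R y)) \<in> open_segment (s *\<^sub>R y) (- (s *\<^sub>R y))"
    by simp
  also have "\<dots> \<subseteq> ri (sublevel C f r)"
    by (rule strictly_subconvexD[OF assms(2) rc \<open>s *\<^sub>R y \<noteq> - (s *\<^sub>R y)\<close>])
  finally show ?thesis
    by (simp add: midpoint_def)
qed

lemma lower_semicontinuous:
  assumes "tvs TYPE('a)" "strictly_subconvex C f" "x \<in> C" "a < f x"
  shows "\<exists>U. open U \<and> x \<in> U \<and> (\<forall>y\<in>U \<inter> C. a < f y)"
proof (cases "a < 0")
  case True
  then have "a < f y" if "y \<in> C" for y
    using nonneg[OF that] by linarith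
  then show ?thesis
    by (intro exI[of _ UNIV]) auto
next
  case False
  define r where "r = (a + f x) / 2"
  have r: "0 < r" "a < r" "r < f x"
    using assms(4) False by (auto simp: r_def)
  have "x \<notin> rc (sublevel C f r)" "x \<in> affine hull (sublevel C f r)"
    using not_mem_rc_sublevel[OF assms(1-3) r(1,3)] subset_affine_hull_sublevel[OF r(1)] assms(3)
    by auto
  then obtain U where U: "open U" "x \<in> U" "U \<inter> sublevel C f r = {}"
    unfolding in_rc_iff by blast
  have "a < f y" if "y \<in> U \<inter> C" for y
  proof -
    have "y \<notin> sublevel C f r"
      using U(3) that by blast
    with that r(2) show ?thesis
      by (simp add: sublevel_def)
  qed
  with U(1,2) show ?thesis
    by blast
qed

lemma upper_semicontinuous:
  assumes "tvs TYPE('a)" "strictly_subconvex C f" "x \<in> ri C" "f x < b"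
  shows "\<exists>U. open U \<and> x \<in> U \<and> (\<forall>y\<in>U \<inter> C. f y < b)"
proof -
  define r where "r = (f x + b) / 2"
  have "x \<in> C"
    using assms(3) ri_subset by blast
  then have r: "f x < r" "r < b" "r > 0"
    using assms(4) nonneg[of x] by (auto simp: r_def)
  have "x \<in> ri (sublevel C f r)"
  proof (cases "x = 0")
    case True
    then show ?thesis
      using zero_mem_ri_sublevel[OF assms(1,2) _ r(3)] assms(3) by simp
  next
    case False
    then show ?thesis
      by (rule nonzero_mem_ri_sublevel[OF assms(1,2) \<open>x \<in> C\<close> _ r(1)])
  qed
  then obtain U where U: "open U" "x \<in> U" "affine hull (sublevel C f r) \<inter> U \<subseteq> sublevel C f r"
    unfolding in_ri_iff by blast
  have "f y < b" if "y \<in> U \<inter> C" for y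
  proof -
    have "y \<in> sublevel C f r"
      using U(3) that subset_affine_hull_sublevel[OF r(3)] by blast
    with r(2) show ?thesis
      by (simp add: sublevel_def)
  qed
  with U(1,2) show ?thesis
    by blast
qed

lemma continuous_on_ri:
  assumes "tvs TYPE('a)" "strictly_subconvex C f"
  shows "continuous_on (ri C) f"
proof (rule continuous_on_if_semicontinuous)
  show "\<exists>U. open U \<and> x \<in> U \<and> (\<forall>y\<in>U \<inter> ri C. a < f y)" if "x \<in> ri C" "a < f x" for x a
    using lower_semicontinuous[OF assms _ that(2)] that(1) ri_subset by blast
  show "\<exists>U. open U \<and> x \<in> U \<and> (\<forall>y\<in>U \<inter> ri C. f y < b)" if "x \<in> ri C" "f x < b" for x b
    using upper_semicontinuous[OF assms that] ri_subset by blast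
qed

end

theorem mainTheorem5:
  fixes C :: "'a::{real_vector,topological_space} set"
    and f :: "'a \<Rightarrow> real"
    and \<alpha> :: real
  assumes "tvs TYPE('a)"
    and "convex C" and "is_cone C"
    and "\<forall>x\<in>C. f x \<ge> 0"
    and "\<alpha> > 0" and "pos_homogeneous C \<alpha> f"
    and "strictly_subconvex C f"
  shows "continuous_on (ri C) f \<and> (C = UNIV \<longrightarrow> continuous_on UNIV f)"
proof -
  interpret homogeneous_on_cone C f \<alpha>
    using assms(3-6) by unfold_locales auto
  show ?thesis
    using continuous_on_ri[OF assms(1,7)] by auto
qed

end
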